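(* Consider the uncertain system $$\dot{\mathbf{x}} = \mathbf{A}\mathbf{x} + \mathbf{b}k_p\big(u + \boldsymbol{\theta}^T\boldsymbol{\phi}(\mathbf{x})\big),$$ with $\mathbf{x}\in\mathbb{R}^n$, $u\in\mathbb{R}$, unknown $\mathbf{A}\in\mathbb{R}^{n\times n}$, known $\mathbf{b}\in\mathbb{R}^n$ with $\mathbf{b}^T\mathbf{b}>0$, unknown constant $k_p\ne0$ with known sign $k_p'=\operatorname{sign}(k_p)$, unknown $\boldsymbol{\theta}\in\mathbb{R}^p$, and known locally Lipschitz $\boldsymbol{\phi}:\mathbb{R}^n\to\mathbb{R}^p$. Let $\dot{\mathbf{x}}_r=\mathbf{A}_r\mathbf{x}_r+\mathbf{b}_r r$ with $\mathbf{A}_r$ Hurwitz and $r$ bounded piecewise continuous, and let $\mathbf{P},\mathbf{Q}$ be symmetric positive definite with $\mathbf{A}_r^T\mathbf{P}+\mathbf{P}\mathbf{A}_r+\mathbf{Q}=\mathbf{0}$. Assume ideal gains $\mathbf{k}_x,k_r$ exist with $\mathbf{A}+\mathbf{b}k_p\mathbf{k}_x^T=\mathbf{A}_r$, $\mathbf{b}k_pk_r=\mathbf{b}_r$. Let $\mathbf{W}^T=[\mathbf{A}\ \ \mathbf{b}k_p\ \ \mathbf{b}k_p\boldsymbol{\theta}^T]\in\mathbb{R}^{n\times(n+1+p)}$. Let $t_q>t_0$ and let $\mathbf{Y}_m(t)\in\mathbb{R}^{n\times(n+1+p)}$ be a signal with $\mathbf{Y}_m(t)=\mathbf{W}^T$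 for all $t\ge t_q$ (as produced by the paper's data-storage procedure once the regressor $[\mathbf{x}^T,u,\boldsymbol{\phi}^T]^T$ satisfies the finite excitation condition at time $t_q$), and let $\eta(t)=0$ for $t<t_q$ and $\eta(t)=1$ for $t\ge t_q$. Define $$\mathbf{E}_1=\mathbf{A}_r-\mathbf{Y}_m\begin{bmatrix}\mathbf{I}_n & \mathbf{0}_{n\times(1+p)}\end{bmatrix}^T-\mathbf{Y}_m\mathbf{c}\,\hat{\mathbf{k}}_x^T,\quad \mathbf{E}_2=\mathbf{b}_r-\mathbf{Y}_m\mathbf{c}\,\hat{k}_r,\quad \mathbf{E}_3=\mathbf{Y}_m\begin{bmatrix}\mathbf{0}_{p\times(n+1)} & \mathbf{I}_p\end{bmatrix}^T-\mathbf{Y}_m\mathbf{c}\,\hat{\boldsymbol{\theta}}^T,$$ where $\mathbf{c}=[\mathbf{0}_{1\times n}\ 1\ \mathbf{0}_{1\times p}]^T$. Apply $u=\hat{\mathbf{k}}_x^T\mathbf{x}+\hat{k}_r r-\hat{\boldsymbol{\theta}}^T\boldsymbol{\phi}(\mathbf{x})$ with $$\dot{\hat{\mathbf{k}}}_x=-\mathbf{x}\mathbf{e}^T\mathbf{P}\mathbf{b}k_p'+\eta\mathbf{E}_1^T\mathbf{b}k_p',\quad \dot{\hat{k}}_r=-r\mathbf{e}^T\mathbf{P}\mathbf{b}k_p'+\eta\mathbf{E}_2^T\mathbf{b}k_p',\quad \dot{\hat{\boldsymbol{\theta}}}=\boldsymbol{\phi}(\mathbf{x})\mathbf{e}^T\mathbf{P}\mathbf{b}k_p'+\eta\mathbf{E}_3^T\mathbf{b}k_p',$$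 where $\mathbf{e}=\mathbf{x}-\mathbf{x}_r$. Let $\boldsymbol{\chi}=[\mathbf{e}^T,\tilde{\mathbf{k}}_x^T,\tilde{k}_r,\tilde{\boldsymbol{\theta}}^T]^T$ with $\tilde{\mathbf{k}}_x=\hat{\mathbf{k}}_x-\mathbf{k}_x$, $\tilde{k}_r=\hat{k}_r-k_r$, $\tilde{\boldsymbol{\theta}}=\hat{\boldsymbol{\theta}}-\boldsymbol{\theta}$. Then: (1) the origin of the closed-loop error system in $\boldsymbol{\chi}$ is uniformly stable for $t\ge t_0$; (2) it is exponentially stable for $t>t_q$; (3) for all $t>t_q$, $$\|\boldsymbol{\chi}(t)\|\le \alpha\, e^{-\kappa(t-t_q)}\|\boldsymbol{\chi}(t_0)\|,$$ with $$\kappa=\frac{1}{2}\,\frac{\min\{\lambda_{\min}(\mathbf{Q}),\,2|k_p|^2\mathbf{b}^T\mathbf{b}\}}{\max\{\lambda_{\max}(\mathbf{P}),\,|k_p|\}},\qquad \alpha=\sqrt{\frac{\max\{\lambda_{\max}(\mathbf{P}),\,|k_p|\}}{\min\{\lambda_{\min}(\mathbf{P}),\,|k_p|\}}},$$ so that the rate $\kappa$ depends only on $\mathbf{P},\mathbf{Q},\mathbf{b},|k_p|$ and not on the excitation level of the regressor.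
   Context: A bounded signal $\boldsymbol{\varphi}(t)\in\mathbb{R}^q$ is finitely exciting if there are constants $\gamma,T>0$ and at least one sequence of times $t_1,\dots,t_q$ in an interval $[t,t+T]$ such that the matrix $[\boldsymbol{\varphi}(t_1)\ \cdots\ \boldsymbol{\varphi}(t_q)]$ is invertible with inverse of norm at most $\gamma$ ($\gamma$ is the excitation level). In the paper, once this holds for $\boldsymbol{\varphi}=[\mathbf{x}^T,u,\boldsymbol{\phi}^T]^T$ (by time $t_q$), filtered data are orthonormalized into an orthogonal $\boldsymbol{\Phi}_b$ with $\mathbf{Y}_b=\mathbf{W}^T\boldsymbol{\Phi}_b$, and $\mathbf{Y}_m=\mathbf{Y}_b\boldsymbol{\Phi}_b^T$, $\eta=\det(\boldsymbol{\Phi}_b\boldsymbol{\Phi}_b^T)$, giving $\mathbf{Y}_m=\mathbf{W}^T$ and $\eta=1$ for $t\ge t_q$, and $\eta=0$ before. $k_p'$ is the known sign of $k_p$; $\lambda_{\min},\lambda_{\max}$ denote minimum and maximum eigenvalues. *)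

theory Defs
  imports "HOL-Analysis.Analysis"
begin

text \<open>Vectors in R^n are real^'n, R^p is real^'p; the regressor space
R^(n+1+p) is indexed by the finite sum type 'n + unit + 'p (blocks: x, u, phi).
An n x m matrix is real^'m^'n (rows indexed by 'n).\<close>

definition outer :: "real^'n \<Rightarrow> real^'m \<Rightarrow> real^'m^'n" where
  "outer u v = (\<chi> i j. u$i * v$j)"

definition sym_pos_def :: "real^'n^'n \<Rightarrow> bool" where
  "sym_pos_def M \<longleftrightarrow> transpose M = M \<and> (\<forall>v. v \<noteq> 0 \<longrightarrow> v \<bullet> (M *v v) > 0)"

text \<open>Real eigenvalues of a real square matrix (all eigenvalues, for symmetric M).\<close>
definition real_eigs :: "real^'n^'n \<Rightarrow> real set" where
  "real_eigs M = {l. \<exists>v. v \<noteq> 0 \<and> M *v v = l *s v}"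

definition lambda_min :: "real^'n^'n \<Rightarrow> real" where
  "lambda_min M = Min (real_eigs M)"

definition lambda_max :: "real^'n^'n \<Rightarrow> real" where
  "lambda_max M = Max (real_eigs M)"

definition hurwitz :: "real^'n^'n \<Rightarrow> bool" where
  "hurwitz M \<longleftrightarrow> (\<forall>l::complex. (\<exists>v::complex^'n. v \<noteq> 0 \<and>
      (\<chi> i j. complex_of_real (M$i$j)) *v v = l *s v) \<longrightarrow> Re l < 0)"

definition loc_lipschitz :: "(real^'n \<Rightarrow> real^'p) \<Rightarrow> bool" where
  "loc_lipschitz f \<longleftrightarrow> (\<forall>x. \<exists>\<epsilon>>0. \<exists>L. \<forall>y\<in>ball x \<epsilon>. \<forall>z\<in>ball x \<epsilon>.
      norm (f y - f z) \<le> L * norm (y - z))"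

definition pw_continuous_from :: "real \<Rightarrow> (real \<Rightarrow> real) \<Rightarrow> bool" where
  "pw_continuous_from t0 r \<longleftrightarrow>
     (\<forall>T. finite {t\<in>{t0..T}. \<not> continuous (at t within {t0..}) r}) \<and>
     (\<forall>t>t0. \<exists>l. (r \<longlongrightarrow> l) (at_left t)) \<and>
     (\<forall>t\<ge>t0. \<exists>l. (r \<longlongrightarrow> l) (at_right t))"

text \<open>c = [0_{1xn} 1 0_{1xp}]^T, [I_n 0]^T and [0 I_p]^T.\<close>
definition cvec :: "real^('n::finite + unit + 'p::finite)" where
  "cvec = (\<chi> i. if i = Inr (Inl ()) then 1 else 0)"

definition sel_x :: "real^'n^('n::finite + unit + 'p::finite)" where
  "sel_x = (\<chi> i j. if i = Inl j then 1 else 0)"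

definition sel_th :: "real^'p^('n::finite + unit + 'p::finite)" where
  "sel_th = (\<chi> i j. if i = Inr (Inr j) then 1 else 0)"

definition WT :: "real^'n::finite^'n \<Rightarrow> real^'n \<Rightarrow> real \<Rightarrow> real^'p::finite \<Rightarrow> real^('n + unit + 'p)^'n" where
  "WT A b kp \<theta> = (\<chi> i j. case j of Inl k \<Rightarrow> A$i$k
                                 | Inr (Inl _) \<Rightarrow> b$i * kp
                                 | Inr (Inr k) \<Rightarrow> b$i * kp * \<theta>$k)"

definition E1 :: "real^'n::finite^'n \<Rightarrow> real^('n + unit + 'p::finite)^'n \<Rightarrow> real^'n \<Rightarrow> real^'n^'n" where
  "E1 Ar Y kxh = Ar - Y ** sel_x - outer (Y *v cvec) kxh"

definition E2 :: "real^'n::finite \<Rightarrow> real^('n + unit + 'p::finite)^'n \<Rightarrow> real \<Rightarrow> real^'n" where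
  "E2 br Y krh = br - krh *s (Y *v cvec)"

definition E3 :: "real^('n::finite + unit + 'p::finite)^'n \<Rightarrow> real^'p \<Rightarrow> real^'p^'n" where
  "E3 Y thh = Y ** sel_th - outer (Y *v cvec) thh"

text \<open>Closed-loop trajectory on [s,oo): continuous, and the closed-loop ODEs (plant with
control law u, and the adaptive laws) hold at every t > s outside a countable set
(which accommodates the discontinuities of r and of eta).\<close>
definition cl_solution ::
  "real^'n^'n \<Rightarrow> real^'n \<Rightarrow> real \<Rightarrow> real^'p \<Rightarrow> (real^'n \<Rightarrow> real^'p) \<Rightarrow>
   real^'n^'n \<Rightarrow> real^'n \<Rightarrow> (real \<Rightarrow> real) \<Rightarrow> real^'n^'n \<Rightarrow> (real \<Rightarrow> real^'n) \<Rightarrow>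
   (real \<Rightarrow> real^('n + unit + 'p)^'n) \<Rightarrow> (real \<Rightarrow> real) \<Rightarrow> real \<Rightarrow>
   (real \<Rightarrow> real^'n) \<Rightarrow> (real \<Rightarrow> real^'n) \<Rightarrow> (real \<Rightarrow> real) \<Rightarrow> (real \<Rightarrow> real^'p) \<Rightarrow> bool" where
  "cl_solution A b kp \<theta> \<phi> Ar br r P xr Ym \<eta> s x kxh krh thh \<longleftrightarrow>
     continuous_on {s..} x \<and> continuous_on {s..} kxh \<and> continuous_on {s..} krh \<and>
     continuous_on {s..} thh \<and>
     (\<exists>S. countable S \<and> (\<forall>t\<in>{s<..} - S.
        (let e = x t - xr t;
             u = kxh t \<bullet> x t + krh t * r t - thh t \<bullet> \<phi> (x t);
             g = e \<bullet> (P *v b)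
         in (x has_vector_derivative (A *v x t + (kp * (u + \<theta> \<bullet> \<phi> (x t))) *s b)) (at t) \<and>
            (kxh has_vector_derivative
               ((- g * sgn kp) *s x t + (\<eta> t * sgn kp) *s (transpose (E1 Ar (Ym t) (kxh t)) *v b))) (at t) \<and>
            (krh has_real_derivative
               (- r t * g * sgn kp + \<eta> t * sgn kp * (E2 br (Ym t) (krh t) \<bullet> b))) (at t) \<and>
            (thh has_vector_derivative
               ((g * sgn kp) *s \<phi> (x t) + (\<eta> t * sgn kp) *s (transpose (E3 (Ym t) (thh t)) *v b))) (at t))))"

definition chi :: "real^'n::finite \<Rightarrow> real \<Rightarrow> real^'p::finite \<Rightarrow> (real \<Rightarrow> real^'n) \<Rightarrow> (real \<Rightarrow> real^'n) \<Rightarrow>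
   (real \<Rightarrow> real^'n) \<Rightarrow> (real \<Rightarrow> real) \<Rightarrow> (real \<Rightarrow> real^'p) \<Rightarrow> real \<Rightarrow> real^('n + 'n + unit + 'p)" where
  "chi kx kr \<theta> x xr kxh krh thh t = (\<chi> i. case i of
       Inl j \<Rightarrow> (x t - xr t)$j
     | Inr (Inl j) \<Rightarrow> (kxh t - kx)$j
     | Inr (Inr (Inl _)) \<Rightarrow> krh t - kr
     | Inr (Inr (Inr j)) \<Rightarrow> (thh t - \<theta>)$j)"

end

theory Submission
  imports Defs
begin

text \<open>A Lyapunov argument with
  V = e\<bullet>P e + |k_p| (|kx~|^2 + kr~^2 + |theta~|^2), where e = x - x_r and ~ marks parameter
  errors. Along closed-loop solutions the terms in e\<bullet>P b cancel between the tracking error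
  and the parameter errors, while once the stored data reproduce W the data-driven terms of
  the adaptive laws equal - |k_p| (b\<bullet>b) times the parameter errors. Hence
  V' = - e\<bullet>Q e - 2 eta k_p^2 (b\<bullet>b) (|kx~|^2 + kr~^2 + |theta~|^2), so V never increases
  and, after t_q, decays at the rate min(lambda_min Q, 2 k_p^2 b\<bullet>b) / max(lambda_max P, |k_p|),
  independently of the excitation level. The sandwich
  min(lambda_min P, |k_p|) |chi|^2 \<le> V \<le> max(lambda_max P, |k_p|) |chi|^2
  turns this into the stated bounds on |chi|.\<close>

lemma has_real_derivative_nonneg_if_greater_right:
  fixes g :: "real \<Rightarrow> real"
  assumes "(g has_real_derivative D) (at s)" "s < b" "\<And>t. s < t \<Longrightarrow> t \<le> b \<Longrightarrow> g s < g t"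
  shows "0 \<le> D"
proof -
  have "((\<lambda>y. (g y - g s) / (y - s)) \<longlongrightarrow> D) (at s within {s<..})"
    using has_field_derivative_at_within[OF assms(1)] by (simp add: has_field_derivative_iff)
  moreover have "eventually (\<lambda>y. 0 \<le> (g y - g s) / (y - s)) (at s within {s<..})"
    unfolding eventually_at using assms(2,3)
    by (intro exI[of _ "b - s"]) (auto simp: dist_real_def intro!: divide_nonneg_pos less_imp_le)
  ultimately show ?thesis
    by (rule tendsto_lowerbound) (simp add: at_within_eq_bot_iff)
qed

text \<open>If f rose from a to b, so would g t = f t - \<epsilon> (t - a) for small \<epsilon>; then g crosses
  a level y outside the countable set g ` C, and at the last crossing s the right difference
  quotients of g are positive although g' s = f' s - \<epsilon> < 0.\<close>
lemma DERIV_nonpos_imp_nonincreasing_countable: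
  fixes f f' :: "real \<Rightarrow> real"
  assumes "a \<le> b" "countable C" "continuous_on {a..b} f"
    and der: "\<And>t. t \<in> {a<..<b} - C \<Longrightarrow> (f has_real_derivative f' t) (at t)"
    and nonpos: "\<And>t. t \<in> {a<..<b} - C \<Longrightarrow> f' t \<le> 0"
  shows "f b \<le> f a"
proof (rule ccontr)
  assume "\<not> f b \<le> f a"
  then have "f a < f b" by simp
  then have "a < b" using \<open>a \<le> b\<close> by (cases "a = b") auto
  define \<epsilon> where "\<epsilon> = (f b - f a) / (2 * (b - a))"
  define g where "g t = f t - \<epsilon> * (t - a)" for t
  have \<epsilon>: "\<epsilon> > 0" using \<open>f a < f b\<close> \<open>a < b\<close> by (simp add: \<epsilon>_def)
  have "0 < (f b - f a) * (b - a)" using \<open>f a < f b\<close> \<open>a < b\<close> by simp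
  then have "g a < g b" using \<open>a < b\<close>
    unfolding g_def \<epsilon>_def by (simp add: field_simps)
  have g_cont: "continuous_on {a..b} g"
    unfolding g_def by (intro continuous_intros assms(3))
  have "uncountable {g a<..<g b}" using \<open>g a < g b\<close> by (simp add: uncountable_open_interval)
  then obtain y where y: "y \<in> {g a<..<g b}" "y \<notin> g ` C"
    using countable_image[OF assms(2), of g] by (metis countable_subset subsetI)
  define K where "K = {a..b} \<inter> g -` {..y}"
  have "compact K"
    unfolding K_def compact_eq_bounded_closed
    by (auto intro: continuous_closed_preimage[OF g_cont] bounded_subset[of "{a..b}"])
  moreover have "K \<noteq> {}" using y \<open>a \<le> b\<close> by (auto simp: K_def)
  ultimately obtain s where "s \<in> K" and s_max: "\<And>t. t \<in> K \<Longrightarrow> t \<le> s"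
    by (metis compact_attains_sup)
  then have "a \<le> s" "s \<le> b" "g s \<le> y" by (auto simp: K_def)
  have above: "y < g t" if "s < t" "t \<le> b" for t
    using s_max[of t] that \<open>a \<le> s\<close> by (force simp: K_def)
  have "s < b" using \<open>s \<le> b\<close> \<open>g s \<le> y\<close> y by (cases "s = b") auto
  obtain z where "s \<le> z" "z \<le> b" "g z = y"
    using IVT'[of g s y b] \<open>g s \<le> y\<close> y \<open>s \<le> b\<close>
      continuous_on_subset[OF g_cont, of "{s..b}"] \<open>a \<le> s\<close> by auto
  then have "g s = y" using above by force
  then have s: "s \<in> {a<..<b} - C" using y \<open>a \<le> s\<close> \<open>s < b\<close> by (cases "s = a") auto
  have "(g has_real_derivative f' s - \<epsilon>) (at s)"
    unfolding g_def by (auto intro!: derivative_eq_intros der[OF s])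
  then have "0 \<le> f' s - \<epsilon>"
    by (rule has_real_derivative_nonneg_if_greater_right[OF _ \<open>s < b\<close>])
      (use above \<open>g s = y\<close> in auto)
  with nonpos[OF s] \<epsilon> show False by simp
qed

lemma exp_decay_if_DERIV_le:
  fixes f f' :: "real \<Rightarrow> real"
  assumes "a \<le> b" "countable C" "continuous_on {a..b} f"
    and der: "\<And>t. t \<in> {a<..<b} - C \<Longrightarrow> (f has_real_derivative f' t) (at t)"
    and le: "\<And>t. t \<in> {a<..<b} - C \<Longrightarrow> f' t \<le> - k * f t"
  shows "f b \<le> exp (- k * (b - a)) * f a"
proof -
  define g where "g t = exp (k * (t - a)) * f t" for t
  have "g b \<le> g a"
  proof (rule DERIV_nonpos_imp_nonincreasing_countable[OF assms(1,2)])
    show "continuous_on {a..b} g" unfolding g_def by (intro continuous_intros assms(3))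
    fix t assume t: "t \<in> {a<..<b} - C"
    show "(g has_real_derivative exp (k * (t - a)) * (k * f t + f' t)) (at t)"
      unfolding g_def by (auto intro!: derivative_eq_intros der[OF t] simp: algebra_simps)
    show "exp (k * (t - a)) * (k * f t + f' t) \<le> 0"
      using le[OF t] by (simp add: mult_nonneg_nonpos)
  qed
  then have "exp (- k * (b - a)) * g b \<le> exp (- k * (b - a)) * f a"
    by (simp add: g_def)
  then show ?thesis by (simp add: g_def mult.assoc[symmetric] exp_add[symmetric])
qed

lemma le_sqrt_ratio_bound:
  fixes lo hi c u v :: real
  assumes "0 < lo" "0 \<le> hi" "0 \<le> c" "0 \<le> v" and "lo * u\<^sup>2 \<le> c * (hi * v\<^sup>2)"
  shows "u \<le> sqrt (hi / lo) * sqrt c * v"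
proof -
  have "u\<^sup>2 \<le> (hi / lo * c) * v\<^sup>2" using assms(1,5) by (simp add: field_simps)
  also have "\<dots> = (sqrt (hi / lo) * sqrt c * v)\<^sup>2" using assms(1-3) by (simp add: power_mult_distrib)
  finally show ?thesis by (rule power2_le_imp_le) (use assms in simp)
qed

lemma sgn_mult_self_eq_abs: "sgn x * x = \<bar>x::real\<bar>"
  by (simp add: abs_if sgn_if)

lemma inner_matrix_vector_symmetric:
  fixes M :: "real^'n^'n"
  assumes "transpose M = M"
  shows "x \<bullet> (M *v y) = (M *v x) \<bullet> y"
  by (metis assms dot_lmul_matrix vector_transpose_matrix)

text \<open>A vector attaining the lower bound \<mu> of the Rayleigh quotient is an eigenvector:
  with w = M v - \<mu> v, the nonnegative form q y = y \<bullet> M y - \<mu> y \<bullet> y satisfies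
  q (v + t w) = 2 t (w \<bullet> w) + t^2 q w, which is negative for small t < 0 unless w = 0.\<close>
lemma eigenvector_if_quadratic_form_minimal:
  fixes M :: "real^'n^'n"
  assumes sym: "transpose M = M"
    and ge: "\<And>x. \<mu> * (x \<bullet> x) \<le> x \<bullet> (M *v x)" and eq: "v \<bullet> (M *v v) = \<mu> * (v \<bullet> v)"
  shows "M *v v = \<mu> *s v"
proof -
  define q where "q y = y \<bullet> (M *v y) - \<mu> * (y \<bullet> y)" for y
  define w where "w = M *v v - \<mu> *\<^sub>R v"
  have q_nonneg: "0 \<le> q y" for y using ge[of y] by (simp add: q_def)
  have expand: "q (v + t *\<^sub>R w) = 2 * t * (w \<bullet> w) + t\<^sup>2 * q w" for t
  proof -
    have "v \<bullet> (M *v w) = (M *v v) \<bullet> w" by (rule inner_matrix_vector_symmetric[OF sym])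
    moreover have "w \<bullet> (M *v v) = w \<bullet> w + \<mu> * (v \<bullet> w)"
      by (simp add: w_def inner_diff_right inner_commute algebra_simps)
    ultimately show ?thesis
      using eq unfolding q_def
      by (simp add: algebra_simps inner_add_left inner_add_right inner_commute power2_eq_square
          matrix_vector_mult_scaleR matrix_vector_right_distrib)
  qed
  have "w = 0"
  proof (rule ccontr)
    assume "w \<noteq> 0"
    then have ww: "0 < w \<bullet> w" by simp
    define t where "t = - (w \<bullet> w) / (q w + 1)"
    have "t < 0" using ww q_nonneg[of w] by (simp add: t_def)
    have "q w / (q w + 1) < 2" using q_nonneg[of w] by (simp add: divide_less_eq)
    then have "(w \<bullet> w) * (q w / (q w + 1)) < (w \<bullet> w) * 2" using ww by (rule mult_strict_left_mono)
    moreover have "t * q w = - ((w \<bullet> w) * (q w / (q w + 1)))" by (simp add: t_def)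
    ultimately have "0 < 2 * (w \<bullet> w) + t * q w" by linarith
    have "q (v + t *\<^sub>R w) = t * (2 * (w \<bullet> w) + t * q w)"
      unfolding expand by (simp add: power2_eq_square algebra_simps)
    also have "\<dots> < 0" using \<open>t < 0\<close> \<open>0 < 2 * (w \<bullet> w) + t * q w\<close> by (rule mult_neg_pos)
    finally show False using q_nonneg[of "v + t *\<^sub>R w"] by linarith
  qed
  then show ?thesis by (simp add: w_def scalar_mult_eq_scaleR)
qed

lemma ex_real_eig_lower_bound:
  fixes M :: "real^'n^'n"
  assumes sym: "transpose M = M"
  shows "\<exists>\<mu>\<in>real_eigs M. \<forall>x. \<mu> * (x \<bullet> x) \<le> x \<bullet> (M *v x)"
proof -
  define f where "f x = x \<bullet> (M *v x)" for x :: "real^'n"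
  have "continuous_on (sphere 0 1) f" unfolding f_def
    by (intro continuous_intros linear_continuous_on matrix_vector_mul_linear)
  moreover have "sphere (0::real^'n) 1 \<noteq> {}" by (simp add: sphere_eq_empty)
  ultimately obtain v where v: "v \<in> sphere 0 1" and v_min: "\<And>y. y \<in> sphere 0 1 \<Longrightarrow> f v \<le> f y"
    using continuous_attains_inf[OF compact_sphere] by blast
  have ge: "f v * (x \<bullet> x) \<le> f x" for x
  proof (cases "x = 0")
    case False
    define u where "u = (1 / norm x) *\<^sub>R x"
    have "f v \<le> f u" using False by (intro v_min) (simp add: u_def)
    moreover have "f x = (norm x)\<^sup>2 * f u"
      using False by (simp add: f_def u_def matrix_vector_mult_scaleR power2_eq_square)
    ultimately show ?thesis
      by (metis inner_ge_zero mult.commute mult_right_mono power2_norm_eq_inner)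
  qed (simp add: f_def)
  have "v \<bullet> v = 1" using v by (simp add: inner_commute norm_eq_1)
  then have "M *v v = f v *s v"
    using ge by (intro eigenvector_if_quadratic_form_minimal[OF sym]) (simp_all add: f_def)
  moreover have "v \<noteq> 0" using v by auto
  ultimately show ?thesis using ge unfolding real_eigs_def f_def by blast
qed

lemma matrix_vector_mult_uminus:
  fixes M :: "'a::ring_1^'n^'m"
  shows "(- M) *v x = - (M *v x)"
  by (simp add: matrix_vector_mult_def vec_eq_iff sum_negf)

lemma ex_real_eig_upper_bound:
  fixes M :: "real^'n^'n"
  assumes sym: "transpose M = M"
  shows "\<exists>\<mu>\<in>real_eigs M. \<forall>x. x \<bullet> (M *v x) \<le> \<mu> * (x \<bullet> x)"
proof -
  have "transpose (- M) = - M" using transpose_scalar[of "-1" M] sym by simp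
  then obtain \<mu> where "\<mu> \<in> real_eigs (- M)" and ge: "\<forall>x. \<mu> * (x \<bullet> x) \<le> x \<bullet> ((- M) *v x)"
    using ex_real_eig_lower_bound by blast
  then obtain v where "v \<noteq> 0" and v: "- (M *v v) = \<mu> *\<^sub>R v"
    by (auto simp: real_eigs_def scalar_mult_eq_scaleR matrix_vector_mult_uminus)
  have "M *v v = (- \<mu>) *s v" using arg_cong[OF v, of uminus] by (simp add: scalar_mult_eq_scaleR)
  then have "- \<mu> \<in> real_eigs M" using \<open>v \<noteq> 0\<close> unfolding real_eigs_def by blast
  moreover have "\<forall>x. x \<bullet> (M *v x) \<le> (- \<mu>) * (x \<bullet> x)"
    using ge by (simp add: matrix_vector_mult_uminus le_minus_iff)
  ultimately show ?thesis by blast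
qed

text \<open>Eigenvectors for distinct eigenvalues of a symmetric matrix are orthogonal, hence
  independent, so there are at most finitely many eigenvalues.\<close>
lemma finite_real_eigs:
  fixes M :: "real^'n^'n"
  assumes sym: "transpose M = M"
  shows "finite (real_eigs M)"
proof -
  define ev where "ev l = (SOME v. v \<noteq> 0 \<and> M *v v = l *s v)" for l
  have ev: "ev l \<noteq> 0 \<and> M *v ev l = l *\<^sub>R ev l" if "l \<in> real_eigs M" for l
  proof -
    have "\<exists>v. v \<noteq> 0 \<and> M *v v = l *s v" using that by (simp add: real_eigs_def)
    then show ?thesis unfolding ev_def scalar_mult_eq_scaleR by (rule someI_ex)
  qed
  have inj: "inj_on ev (real_eigs M)"
  proof (rule inj_onI)
    fix l1 l2 assume l: "l1 \<in> real_eigs M" "l2 \<in> real_eigs M" "ev l1 = ev l2"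
    then have "l1 *\<^sub>R ev l1 = l2 *\<^sub>R ev l1" using ev[OF l(1)] ev[OF l(2)] by metis
    then have "(l1 - l2) *\<^sub>R ev l1 = 0" by (simp add: scaleR_diff_left)
    then show "l1 = l2" using ev[OF l(1)] by simp
  qed
  have "pairwise orthogonal (ev ` real_eigs M)"
  proof (clarsimp simp: pairwise_def)
    fix l1 l2 assume l: "l1 \<in> real_eigs M" "l2 \<in> real_eigs M" "ev l1 \<noteq> ev l2"
    have "l2 * (ev l1 \<bullet> ev l2) = ev l1 \<bullet> (M *v ev l2)" using ev[OF l(2)] by simp
    also have "\<dots> = (M *v ev l1) \<bullet> ev l2" by (rule inner_matrix_vector_symmetric[OF sym])
    also have "\<dots> = l1 * (ev l1 \<bullet> ev l2)" using ev[OF l(1)] by simp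
    finally have "(l1 - l2) * (ev l1 \<bullet> ev l2) = 0" by (simp only: left_diff_distrib)
    moreover have "l1 \<noteq> l2" using l(3) by auto
    ultimately show "orthogonal (ev l1) (ev l2)" by (simp add: orthogonal_def)
  qed
  moreover have "0 \<notin> ev ` real_eigs M" using ev by force
  ultimately have "independent (ev ` real_eigs M)" by (rule pairwise_orthogonal_independent)
  then have "finite (ev ` real_eigs M)" by (rule independent_imp_finite)
  then show ?thesis using inj by (rule finite_imageD)
qed

lemma
  fixes M :: "real^'n^'n"
  assumes sym: "transpose M = M"
  shows lambda_min_le_quadratic_form: "lambda_min M * (x \<bullet> x) \<le> x \<bullet> (M *v x)"
    and quadratic_form_le_lambda_max: "x \<bullet> (M *v x) \<le> lambda_max M * (x \<bullet> x)"
    and lambda_min_in_real_eigs: "lambda_min M \<in> real_eigs M"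
proof -
  obtain \<mu> where \<mu>: "\<mu> \<in> real_eigs M" "\<forall>x. \<mu> * (x \<bullet> x) \<le> x \<bullet> (M *v x)"
    using ex_real_eig_lower_bound[OF sym] by blast
  obtain \<nu> where \<nu>: "\<nu> \<in> real_eigs M" "\<forall>x. x \<bullet> (M *v x) \<le> \<nu> * (x \<bullet> x)"
    using ex_real_eig_upper_bound[OF sym] by blast
  note fin = finite_real_eigs[OF sym]
  have "lambda_min M \<le> \<mu>" unfolding lambda_min_def using fin \<mu>(1) by (rule Min_le)
  then show "lambda_min M * (x \<bullet> x) \<le> x \<bullet> (M *v x)"
    using \<mu>(2) by (meson inner_ge_zero mult_right_mono order_trans)
  have "\<nu> \<le> lambda_max M" unfolding lambda_max_def using fin \<nu>(1) by (rule Max_ge)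
  then show "x \<bullet> (M *v x) \<le> lambda_max M * (x \<bullet> x)"
    using \<nu>(2) by (meson inner_ge_zero mult_right_mono order_trans)
  show "lambda_min M \<in> real_eigs M" unfolding lambda_min_def using fin \<mu>(1) by (auto intro: Min_in)
qed

lemma lambda_min_pos_if_sym_pos_def:
  fixes M :: "real^'n^'n"
  assumes "sym_pos_def M"
  shows "0 < lambda_min M"
proof -
  have sym: "transpose M = M" using assms by (simp add: sym_pos_def_def)
  obtain v where "v \<noteq> 0" and v: "M *v v = lambda_min M *s v"
    using lambda_min_in_real_eigs[OF sym] by (auto simp: real_eigs_def)
  have "0 < v \<bullet> (M *v v)" using assms \<open>v \<noteq> 0\<close> by (simp add: sym_pos_def_def)
  then have "0 < lambda_min M * (v \<bullet> v)" using v by (simp add: scalar_mult_eq_scaleR)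
  moreover have "0 < v \<bullet> v" using \<open>v \<noteq> 0\<close> by simp
  ultimately show ?thesis by (rule zero_less_mult_pos2)
qed

lemma sum_UNIV_Plus:
  "sum f (UNIV :: ('a::finite + 'b::finite) set) = sum (f \<circ> Inl) UNIV + sum (f \<circ> Inr) UNIV"
  by (metis UNIV_Plus_UNIV finite sum.Plus)

lemma outer_mult_vector: "outer u v *v w = (v \<bullet> w) *\<^sub>R u"
  by (simp add: vec_eq_iff matrix_vector_mult_def outer_def inner_vec_def sum_distrib_left
      algebra_simps)

lemma WT_mult_sel_x: "WT A b kp \<theta> ** sel_x = A"
  by (simp add: vec_eq_iff matrix_matrix_mult_def sel_x_def WT_def if_distrib[of "\<lambda>y. _ * y"]
      sum.delta' cong: if_cong)

lemma WT_mult_cvec: "WT A b kp \<theta> *v cvec = kp *s b"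
  by (simp add: vec_eq_iff matrix_vector_mult_def cvec_def WT_def if_distrib[of "\<lambda>y. _ * y"]
      sum.delta' cong: if_cong)

lemma WT_mult_sel_th: "WT A b kp \<theta> ** sel_th = kp *\<^sub>R outer b \<theta>"
  by (simp add: vec_eq_iff matrix_matrix_mult_def sel_th_def WT_def outer_def
      if_distrib[of "\<lambda>y. _ * y"] sum.delta' cong: if_cong)

lemma transpose_neg_outer_mult_vector:
  "transpose (- (c *\<^sub>R outer u v)) *v w = (- (c * (u \<bullet> w))) *\<^sub>R v"
  by (simp add: vec_eq_iff matrix_vector_mult_def transpose_def outer_def inner_vec_def
      sum_distrib_left algebra_simps sum_negf)

lemma transpose_E1_WT_mult:
  assumes "A + kp *\<^sub>R outer b kx = Ar"
  shows "transpose (E1 Ar (WT A b kp \<theta>) k) *v b = (- (kp * (b \<bullet> b))) *\<^sub>R (k - kx)"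
proof -
  have "E1 Ar (WT A b kp \<theta>) k = - (kp *\<^sub>R outer b (k - kx))"
    using assms[symmetric]
    by (simp add: E1_def WT_mult_sel_x WT_mult_cvec vec_eq_iff outer_def scalar_mult_eq_scaleR
        algebra_simps)
  then show ?thesis by (simp only: transpose_neg_outer_mult_vector)
qed

lemma E2_WT_inner:
  assumes "(kp * kr) *s b = br"
  shows "E2 br (WT A b kp \<theta>) k \<bullet> b = - (kp * (b \<bullet> b) * (k - kr))"
  using assms[symmetric]
  by (simp add: E2_def WT_mult_cvec scalar_mult_eq_scaleR inner_diff_left algebra_simps)

lemma transpose_E3_WT_mult:
  "transpose (E3 (WT A b kp \<theta>) th) *v b = (- (kp * (b \<bullet> b))) *\<^sub>R (th - \<theta>)"
proof -
  have "E3 (WT A b kp \<theta>) th = - (kp *\<^sub>R outer b (th - \<theta>))"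
    by (simp add: E3_def WT_mult_sel_th WT_mult_cvec vec_eq_iff outer_def scalar_mult_eq_scaleR
        algebra_simps)
  then show ?thesis by (simp only: transpose_neg_outer_mult_vector)
qed

lemma tracking_error_dynamics:
  assumes "A + kp *\<^sub>R outer b kx = Ar" and "(kp * kr) *s b = br"
  shows "A *v x + (kp * (kxh \<bullet> x + krh * r - thh \<bullet> f + \<theta> \<bullet> f)) *s b - (Ar *v xr + r *s br)
    = Ar *v (x - xr) + (kp * ((kxh - kx) \<bullet> x + (krh - kr) * r - (thh - \<theta>) \<bullet> f)) *\<^sub>R b"
proof -
  have "A *v x = Ar *v x - (kp * (kx \<bullet> x)) *\<^sub>R b"
    using assms(1)[symmetric]
    by (simp add: matrix_vector_mult_add_rdistrib outer_mult_vector
        flip: scaleR_matrix_vector_assoc)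
  moreover have "r *s br = (r * (kp * kr)) *\<^sub>R b"
    using assms(2)[symmetric] by (simp add: scalar_mult_eq_scaleR)
  ultimately show ?thesis
    by (simp add: scalar_mult_eq_scaleR matrix_vector_mult_diff_distrib inner_diff_left
        algebra_simps)
qed

lemma lyapunov_equation_quadratic_form:
  fixes Ar P Q :: "real^'n^'n"
  assumes lyap: "transpose Ar ** P + P ** Ar + Q = 0" and sym: "transpose P = P"
  shows "2 * ((Ar *v e) \<bullet> (P *v e)) = - (e \<bullet> (Q *v e))"
proof -
  have "(Ar *v e) \<bullet> (P *v e) = e \<bullet> ((transpose Ar ** P) *v e)"
    by (metis dot_lmul_matrix matrix_vector_mul_assoc vector_transpose_matrix)
  moreover have "(Ar *v e) \<bullet> (P *v e) = e \<bullet> ((P ** Ar) *v e)"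
    by (metis inner_commute inner_matrix_vector_symmetric[OF sym] matrix_vector_mul_assoc)
  ultimately have "2 * ((Ar *v e) \<bullet> (P *v e)) = e \<bullet> ((transpose Ar ** P + P ** Ar) *v e)"
    by (simp add: matrix_vector_mult_add_rdistrib inner_add_right)
  also have "transpose Ar ** P + P ** Ar = - Q" using lyap by (simp add: eq_neg_iff_add_eq_0)
  finally show ?thesis by (simp add: matrix_vector_mult_uminus)
qed

lemma has_real_derivative_inner:
  assumes "(f has_vector_derivative f') (at t)" "(g has_vector_derivative g') (at t)"
  shows "((\<lambda>s. f s \<bullet> g s) has_real_derivative f' \<bullet> g t + f t \<bullet> g') (at t)"
  using has_derivative_inner[OF assms[unfolded has_vector_derivative_def]]
  unfolding has_field_derivative_def
  by (rule has_derivative_eq_rhs) (auto simp: fun_eq_iff algebra_simps)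

lemma has_real_derivative_quadratic_form:
  fixes M :: "real^'n^'n"
  assumes "transpose M = M" "(f has_vector_derivative f') (at t)"
  shows "((\<lambda>s. f s \<bullet> (M *v f s)) has_real_derivative 2 * (f' \<bullet> (M *v f t))) (at t)"
proof -
  have "((\<lambda>s. M *v f s) has_vector_derivative M *v f') (at t)"
    by (rule bounded_linear.has_vector_derivative[OF matrix_vector_mul_bounded_linear assms(2)])
  from has_real_derivative_inner[OF assms(2) this] show ?thesis
    by (simp add: inner_matrix_vector_symmetric[OF assms(1), of "f t"] inner_commute)
qed

lemma has_real_derivative_inner_self:
  assumes "(f has_vector_derivative f') (at t)"
  shows "((\<lambda>s. f s \<bullet> f s) has_real_derivative 2 * (f' \<bullet> f t)) (at t)"
  using has_real_derivative_inner[OF assms assms] by (simp add: inner_commute)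

locale mrac =
  fixes A :: "real^'n::finite^'n" and b :: "real^'n" and kp :: real and \<theta> :: "real^'p::finite"
    and \<phi> :: "real^'n \<Rightarrow> real^'p" and Ar :: "real^'n^'n" and br :: "real^'n"
    and r :: "real \<Rightarrow> real" and xr :: "real \<Rightarrow> real^'n" and P Q :: "real^'n^'n"
    and kx :: "real^'n" and kr :: real and t0 tq :: real
    and Ym :: "real \<Rightarrow> real^('n + unit + 'p)^'n" and \<eta> :: "real \<Rightarrow> real"
  assumes bb: "b \<bullet> b > 0" and kp: "kp \<noteq> 0"
    and xr_cont: "continuous_on {t0..} xr"
    and xr_ode: "\<exists>S. countable S \<and>
        (\<forall>t\<in>{t0<..} - S. (xr has_vector_derivative (Ar *v xr t + r t *s br)) (at t))"
    and P_pd: "sym_pos_def P" and Q_pd: "sym_pos_def Q"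
    and lyap: "transpose Ar ** P + P ** Ar + Q = 0"
    and match_x: "A + kp *\<^sub>R outer b kx = Ar" and match_r: "(kp * kr) *s b = br"
    and Ym: "\<forall>t\<ge>tq. Ym t = WT A b kp \<theta>" and eta: "\<forall>t. \<eta> t = (if t < tq then 0 else 1)"
begin

definition V_lo :: real where "V_lo = min (lambda_min P) \<bar>kp\<bar>"
definition V_hi :: real where "V_hi = max (lambda_max P) \<bar>kp\<bar>"
definition V_rate :: real where "V_rate = min (lambda_min Q) (2 * \<bar>kp\<bar>^2 * (b \<bullet> b))"
definition \<kappa> :: real where "\<kappa> = (1/2) * V_rate / V_hi"
definition \<alpha> :: real where "\<alpha> = sqrt (V_hi / V_lo)"

lemma sym_P: "transpose P = P" and sym_Q: "transpose Q = Q"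
  using P_pd Q_pd by (simp_all add: sym_pos_def_def)

lemma V_lo_pos: "0 < V_lo"
  using lambda_min_pos_if_sym_pos_def[OF P_pd] kp by (simp add: V_lo_def)

lemma V_hi_pos: "0 < V_hi"
  using kp by (simp add: V_hi_def less_max_iff_disj)

lemma V_rate_pos: "0 < V_rate"
  using lambda_min_pos_if_sym_pos_def[OF Q_pd] kp bb by (simp add: V_rate_def)

lemma \<kappa>_pos: "0 < \<kappa>"
  using V_rate_pos V_hi_pos by (simp add: \<kappa>_def)

lemma \<alpha>_pos: "0 < \<alpha>"
  using V_lo_pos V_hi_pos by (simp add: \<alpha>_def)

lemma eta_cases: "\<eta> t = 0 \<or> \<eta> t = 1 \<and> Ym t = WT A b kp \<theta>"
  using eta Ym by (cases "t < tq") auto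

lemma adaptive_term_kx:
  "(\<eta> t * sgn kp) *s (transpose (E1 Ar (Ym t) k) *v b) = (- (\<eta> t * \<bar>kp\<bar> * (b \<bullet> b))) *\<^sub>R (k - kx)"
  using eta_cases[of t]
  by (auto simp del: transpose_matrix_vector
      simp: transpose_E1_WT_mult[OF match_x] scalar_mult_eq_scaleR sgn_mult_self_eq_abs
      mult.assoc[symmetric])

lemma adaptive_term_kr:
  "\<eta> t * sgn kp * (E2 br (Ym t) k \<bullet> b) = - (\<eta> t * \<bar>kp\<bar> * (b \<bullet> b) * (k - kr))"
  using eta_cases[of t]
  by (auto simp: E2_WT_inner[OF match_r] sgn_mult_self_eq_abs mult.assoc[symmetric])

lemma adaptive_term_theta:
  "(\<eta> t * sgn kp) *s (transpose (E3 (Ym t) k) *v b) = (- (\<eta> t * \<bar>kp\<bar> * (b \<bullet> b))) *\<^sub>R (k - \<theta>)"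
  using eta_cases[of t]
  by (auto simp del: transpose_matrix_vector
      simp: transpose_E3_WT_mult scalar_mult_eq_scaleR sgn_mult_self_eq_abs
      mult.assoc[symmetric])

end

locale mrac_trajectory = mrac +
  fixes s :: real and x kxh krh thh
  assumes start: "t0 \<le> s"
    and solution: "cl_solution A b kp \<theta> \<phi> Ar br r P xr Ym \<eta> s x kxh krh thh"
begin

abbreviation err where
  "err \<equiv> chi kx kr \<theta> x xr kxh krh thh"

definition param_err :: "real \<Rightarrow> real" where
  "param_err t = (kxh t - kx) \<bullet> (kxh t - kx) + (krh t - kr)\<^sup>2 + (thh t - \<theta>) \<bullet> (thh t - \<theta>)"

definition V :: "real \<Rightarrow> real" where
  "V t = (x t - xr t) \<bullet> (P *v (x t - xr t)) + \<bar>kp\<bar> * param_err t"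

definition V' :: "real \<Rightarrow> real" where
  "V' t = - ((x t - xr t) \<bullet> (Q *v (x t - xr t))) - 2 * \<eta> t * kp\<^sup>2 * (b \<bullet> b) * param_err t"

definition mismatch :: "real \<Rightarrow> real" where
  "mismatch t = (kxh t - kx) \<bullet> x t + (krh t - kr) * r t - (thh t - \<theta>) \<bullet> \<phi> (x t)"

definition ePb :: "real \<Rightarrow> real" where
  "ePb t = (x t - xr t) \<bullet> (P *v b)"

lemma param_err_nonneg: "0 \<le> param_err t"
  by (simp add: param_err_def)

lemma norm_err_power2: "(norm (err t))\<^sup>2 = (x t - xr t) \<bullet> (x t - xr t) + param_err t"
  unfolding power2_norm_eq_inner inner_vec_def
  by (simp add: sum_UNIV_Plus chi_def param_err_def o_def power2_eq_square inner_vec_def)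

lemma
  shows V_lower: "V_lo * (norm (err t))\<^sup>2 \<le> V t"
    and V_upper: "V t \<le> V_hi * (norm (err t))\<^sup>2"
proof -
  let ?e = "x t - xr t"
  have "V_lo * (?e \<bullet> ?e) \<le> lambda_min P * (?e \<bullet> ?e)"
    by (intro mult_right_mono) (simp_all add: V_lo_def)
  also have "\<dots> \<le> ?e \<bullet> (P *v ?e)" by (rule lambda_min_le_quadratic_form[OF sym_P])
  finally have "V_lo * (?e \<bullet> ?e) \<le> ?e \<bullet> (P *v ?e)" .
  moreover have "V_lo * param_err t \<le> \<bar>kp\<bar> * param_err t"
    by (simp add: V_lo_def mult_right_mono param_err_nonneg)
  ultimately show "V_lo * (norm (err t))\<^sup>2 \<le> V t"
    by (simp add: V_def norm_err_power2 distrib_left)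
  have "?e \<bullet> (P *v ?e) \<le> lambda_max P * (?e \<bullet> ?e)"
    by (rule quadratic_form_le_lambda_max[OF sym_P])
  also have "\<dots> \<le> V_hi * (?e \<bullet> ?e)" by (intro mult_right_mono) (simp_all add: V_hi_def)
  finally have "?e \<bullet> (P *v ?e) \<le> V_hi * (?e \<bullet> ?e)" .
  moreover have "\<bar>kp\<bar> * param_err t \<le> V_hi * param_err t"
    by (simp add: V_hi_def mult_right_mono param_err_nonneg)
  ultimately show "V t \<le> V_hi * (norm (err t))\<^sup>2"
    by (simp add: V_def norm_err_power2 distrib_left)
qed

lemma error_energy_derivative:
  assumes xr': "(xr has_vector_derivative (Ar *v xr t + r t *s br)) (at t)"
    and x': "(x has_vector_derivative (A *v x t
      + (kp * (kxh t \<bullet> x t + krh t * r t - thh t \<bullet> \<phi> (x t) + \<theta> \<bullet> \<phi> (x t))) *s b)) (at t)"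
  shows "((\<lambda>u. (x u - xr u) \<bullet> (P *v (x u - xr u))) has_real_derivative
      - ((x t - xr t) \<bullet> (Q *v (x t - xr t))) + 2 * kp * mismatch t * ePb t) (at t)"
proof -
  let ?e = "x t - xr t" and ?e' = "Ar *v (x t - xr t) + (kp * mismatch t) *\<^sub>R b"
  have "((\<lambda>u. x u - xr u) has_vector_derivative ?e') (at t)"
    using has_vector_derivative_diff[OF x' xr']
    by (simp only: tracking_error_dynamics[OF match_x match_r] mismatch_def)
  then have "((\<lambda>u. (x u - xr u) \<bullet> (P *v (x u - xr u))) has_real_derivative
      2 * (?e' \<bullet> (P *v ?e))) (at t)"
    by (rule has_real_derivative_quadratic_form[OF sym_P])
  moreover have "2 * (?e' \<bullet> (P *v ?e))
      = 2 * ((Ar *v ?e) \<bullet> (P *v ?e)) + 2 * kp * mismatch t * (b \<bullet> (P *v ?e))"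
    by (simp add: inner_add_left)
  moreover have "b \<bullet> (P *v ?e) = ePb t"
    unfolding ePb_def by (simp add: inner_matrix_vector_symmetric[OF sym_P] inner_commute)
  ultimately show ?thesis
    using lyapunov_equation_quadratic_form[OF lyap sym_P, of ?e] by (auto elim: DERIV_cong)
qed

lemma param_err_derivative:
  assumes kxh': "(kxh has_vector_derivative ((- ePb t * sgn kp) *s x t
      + (\<eta> t * sgn kp) *s (transpose (E1 Ar (Ym t) (kxh t)) *v b))) (at t)"
    and krh': "(krh has_real_derivative (- r t * ePb t * sgn kp
      + \<eta> t * sgn kp * (E2 br (Ym t) (krh t) \<bullet> b))) (at t)"
    and thh': "(thh has_vector_derivative ((ePb t * sgn kp) *s \<phi> (x t)
      + (\<eta> t * sgn kp) *s (transpose (E3 (Ym t) (thh t)) *v b))) (at t)"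
  shows "(param_err has_real_derivative
      - 2 * sgn kp * ePb t * mismatch t - 2 * \<eta> t * \<bar>kp\<bar> * (b \<bullet> b) * param_err t) (at t)"
proof -
  define c where "c = \<eta> t * \<bar>kp\<bar> * (b \<bullet> b)"
  have "((\<lambda>u. kxh u - kx) has_vector_derivative
      (- ePb t * sgn kp) *\<^sub>R x t - c *\<^sub>R (kxh t - kx)) (at t)"
    using has_vector_derivative_diff[OF kxh' has_vector_derivative_const[of kx]]
    unfolding adaptive_term_kx by (simp add: scalar_mult_eq_scaleR c_def)
  note dkx = has_real_derivative_inner_self[OF this]
  have "((\<lambda>u. thh u - \<theta>) has_vector_derivative
      (ePb t * sgn kp) *\<^sub>R \<phi> (x t) - c *\<^sub>R (thh t - \<theta>)) (at t)"
    using has_vector_derivative_diff[OF thh' has_vector_derivative_const[of \<theta>]]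
    unfolding adaptive_term_theta by (simp add: scalar_mult_eq_scaleR c_def)
  note dth = has_real_derivative_inner_self[OF this]
  have dkr: "((\<lambda>u. (krh u - kr)\<^sup>2) has_real_derivative
      2 * (krh t - kr) * (- r t * ePb t * sgn kp - c * (krh t - kr))) (at t)"
    using krh' by (auto intro!: derivative_eq_intros simp: adaptive_term_kr c_def)
  have "(param_err has_real_derivative
      2 * (((- ePb t * sgn kp) *\<^sub>R x t - c *\<^sub>R (kxh t - kx)) \<bullet> (kxh t - kx))
      + 2 * (krh t - kr) * (- r t * ePb t * sgn kp - c * (krh t - kr))
      + 2 * (((ePb t * sgn kp) *\<^sub>R \<phi> (x t) - c *\<^sub>R (thh t - \<theta>)) \<bullet> (thh t - \<theta>))) (at t)"
    unfolding param_err_def[abs_def] by (intro DERIV_add dkx dkr dth)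
  then show ?thesis
    by (simp add: c_def mismatch_def param_err_def inner_diff_left inner_diff_right inner_commute
        power2_eq_square algebra_simps)
qed

lemma V_has_derivative_at:
  assumes xr': "(xr has_vector_derivative (Ar *v xr t + r t *s br)) (at t)"
    and x': "(x has_vector_derivative (A *v x t
      + (kp * (kxh t \<bullet> x t + krh t * r t - thh t \<bullet> \<phi> (x t) + \<theta> \<bullet> \<phi> (x t))) *s b)) (at t)"
    and kxh': "(kxh has_vector_derivative ((- ePb t * sgn kp) *s x t
      + (\<eta> t * sgn kp) *s (transpose (E1 Ar (Ym t) (kxh t)) *v b))) (at t)"
    and krh': "(krh has_real_derivative (- r t * ePb t * sgn kp
      + \<eta> t * sgn kp * (E2 br (Ym t) (krh t) \<bullet> b))) (at t)"
    and thh': "(thh has_vector_derivative ((ePb t * sgn kp) *s \<phi> (x t)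
      + (\<eta> t * sgn kp) *s (transpose (E3 (Ym t) (thh t)) *v b))) (at t)"
  shows "(V has_real_derivative V' t) (at t)"
proof -
  have "(V has_real_derivative
      (- ((x t - xr t) \<bullet> (Q *v (x t - xr t))) + 2 * kp * mismatch t * ePb t)
      + \<bar>kp\<bar> * (- 2 * sgn kp * ePb t * mismatch t
                   - 2 * \<eta> t * \<bar>kp\<bar> * (b \<bullet> b) * param_err t)) (at t)"
    unfolding V_def[abs_def]
    by (intro DERIV_add DERIV_cmult error_energy_derivative[OF xr' x']
        param_err_derivative[OF kxh' krh' thh'])
  then show ?thesis
    by (rule DERIV_cong) (simp add: V'_def abs_if sgn_if algebra_simps power2_eq_square)
qed

lemma V_derivative:
  obtains C where "countable C" and "\<And>t. t \<in> {s<..} - C \<Longrightarrow> (V has_real_derivative V' t) (at t)"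
proof -
  obtain S where "countable S" and ode:
    "\<And>t. t \<in> {s<..} - S \<Longrightarrow> (x has_vector_derivative (A *v x t
      + (kp * (kxh t \<bullet> x t + krh t * r t - thh t \<bullet> \<phi> (x t) + \<theta> \<bullet> \<phi> (x t))) *s b)) (at t)
      \<and> (kxh has_vector_derivative ((- ePb t * sgn kp) *s x t
          + (\<eta> t * sgn kp) *s (transpose (E1 Ar (Ym t) (kxh t)) *v b))) (at t)
      \<and> (krh has_real_derivative (- r t * ePb t * sgn kp
          + \<eta> t * sgn kp * (E2 br (Ym t) (krh t) \<bullet> b))) (at t)
      \<and> (thh has_vector_derivative ((ePb t * sgn kp) *s \<phi> (x t)
          + (\<eta> t * sgn kp) *s (transpose (E3 (Ym t) (thh t)) *v b))) (at t)"
    using solution unfolding cl_solution_def Let_def ePb_def by blast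
  obtain Sr where "countable Sr"
    and xr': "\<And>t. t \<in> {t0<..} - Sr \<Longrightarrow> (xr has_vector_derivative (Ar *v xr t + r t *s br)) (at t)"
    using xr_ode by blast
  show thesis
  proof (rule that[of "S \<union> Sr"])
    show "countable (S \<union> Sr)" using \<open>countable S\<close> \<open>countable Sr\<close> by simp
    fix t assume "t \<in> {s<..} - (S \<union> Sr)"
    then have "t \<in> {s<..} - S" "t \<in> {t0<..} - Sr" using start by auto
    from xr'[OF this(2)] ode[OF this(1)] show "(V has_real_derivative V' t) (at t)"
      by (elim conjE) (rule V_has_derivative_at; assumption)
  qed
qed

lemma V_continuous: "continuous_on {s..} V"
proof -
  have "continuous_on {s..} xr" using xr_cont by (rule continuous_on_subset) (use start in auto)
  then show ?thesis
    using solution unfolding cl_solution_def V_def[abs_def] param_err_def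
    by (intro continuous_intros bounded_linear.continuous_on[OF matrix_vector_mul_bounded_linear])
      auto
qed

lemma V'_le: "V' t \<le> - (\<eta> t * V_rate) * (norm (err t))\<^sup>2"
proof -
  let ?e = "x t - xr t"
  have "V_rate * (?e \<bullet> ?e) \<le> lambda_min Q * (?e \<bullet> ?e)"
    by (intro mult_right_mono) (simp_all add: V_rate_def)
  also have "\<dots> \<le> ?e \<bullet> (Q *v ?e)" by (rule lambda_min_le_quadratic_form[OF sym_Q])
  finally have "V_rate * (?e \<bullet> ?e) \<le> ?e \<bullet> (Q *v ?e)" .
  moreover have "V_rate * param_err t \<le> 2 * kp\<^sup>2 * (b \<bullet> b) * param_err t"
    by (intro mult_right_mono param_err_nonneg) (simp add: V_rate_def)
  moreover have "0 \<le> V_rate * (?e \<bullet> ?e)" using V_rate_pos by simp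
  moreover have "- (\<eta> t * V_rate) * (norm (err t))\<^sup>2
      = - \<eta> t * (V_rate * (?e \<bullet> ?e)) - \<eta> t * (V_rate * param_err t)"
    by (simp add: norm_err_power2 algebra_simps)
  ultimately show ?thesis
    using eta_cases[of t] by (auto simp: V'_def)
qed

lemma V_le_exp_if_V'_le:
  assumes "s \<le> a" "a \<le> t" and V'_le: "\<And>u. a < u \<Longrightarrow> u < t \<Longrightarrow> V' u \<le> - k * V u"
  shows "V t \<le> exp (- k * (t - a)) * V a"
proof -
  obtain C where "countable C"
    and dV: "\<And>u. u \<in> {s<..} - C \<Longrightarrow> (V has_real_derivative V' u) (at u)"
    using V_derivative by blast
  show ?thesis
  proof (rule exp_decay_if_DERIV_le[OF \<open>a \<le> t\<close> \<open>countable C\<close>])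
    show "continuous_on {a..t} V"
      using V_continuous by (rule continuous_on_subset) (use assms in auto)
    fix u assume "u \<in> {a<..<t} - C"
    then show "(V has_real_derivative V' u) (at u)" and "V' u \<le> - k * V u"
      using assms by (auto intro: dV V'_le)
  qed
qed

lemma V_nonincreasing:
  assumes "s \<le> a" "a \<le> t"
  shows "V t \<le> V a"
proof -
  have "V' u \<le> - 0 * V u" for u
  proof -
    have "0 \<le> \<eta> u * V_rate * (norm (err u))\<^sup>2" using eta V_rate_pos by simp
    then show ?thesis using V'_le[of u] by simp
  qed
  then show ?thesis using V_le_exp_if_V'_le[OF assms, of 0] by simp
qed

lemma V_exp_decay:
  assumes "s \<le> a" "tq \<le> a" "a \<le> t"
  shows "V t \<le> exp (- (2 * \<kappa>) * (t - a)) * V a"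
proof (rule V_le_exp_if_V'_le)
  fix u assume "a < u"
  have "2 * \<kappa> * V u \<le> 2 * \<kappa> * (V_hi * (norm (err u))\<^sup>2)"
    by (intro mult_left_mono V_upper) (use \<kappa>_pos in simp)
  also have "\<dots> = V_rate * (norm (err u))\<^sup>2" using V_hi_pos by (simp add: \<kappa>_def)
  moreover have "\<eta> u = 1" using eta \<open>a < u\<close> assms by simp
  ultimately show "V' u \<le> - (2 * \<kappa>) * V u" using V'_le[of u] by simp
qed (use assms in auto)

lemma norm_err_le_if_V_le:
  assumes "V t \<le> c * V a" "0 \<le> c"
  shows "norm (err t) \<le> \<alpha> * sqrt c * norm (err a)"
proof -
  have "V_lo * (norm (err t))\<^sup>2 \<le> c * (V_hi * (norm (err a))\<^sup>2)"
    using V_lower[of t] assms(1) mult_left_mono[OF V_upper[of a] assms(2)] by linarith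
  then show ?thesis
    unfolding \<alpha>_def using V_lo_pos V_hi_pos assms(2) by (intro le_sqrt_ratio_bound) auto
qed

lemma norm_err_bound:
  assumes "s \<le> t"
  shows "norm (err t) \<le> \<alpha> * norm (err s)"
  using norm_err_le_if_V_le[of t 1 s] V_nonincreasing[OF order_refl assms] by simp

lemma norm_err_exp_decay:
  assumes "s \<le> a" "tq \<le> a" "a \<le> t"
  shows "norm (err t) \<le> \<alpha> * exp (- \<kappa> * (t - a)) * norm (err s)"
proof -
  have sq: "exp (- (2 * \<kappa>) * (t - a)) = (exp (- \<kappa> * (t - a)))\<^sup>2"
    by (simp add: power2_eq_square algebra_simps flip: exp_add)
  have "V t \<le> exp (- (2 * \<kappa>) * (t - a)) * V a" by (rule V_exp_decay[OF assms])
  also have "\<dots> \<le> exp (- (2 * \<kappa>) * (t - a)) * V s"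
    by (intro mult_left_mono V_nonincreasing) (use assms in auto)
  finally have "V t \<le> (exp (- \<kappa> * (t - a)))\<^sup>2 * V s" unfolding sq .
  from norm_err_le_if_V_le[OF this zero_le_power2] show ?thesis by simp
qed

end

context mrac
begin

lemma mrac_trajectoryI:
  assumes "t0 \<le> s" and "cl_solution A b kp \<theta> \<phi> Ar br r P xr Ym \<eta> s x kxh krh thh"
  shows "mrac_trajectory A b kp \<theta> \<phi> Ar br r xr P Q kx kr t0 tq Ym \<eta> s x kxh krh thh"
  by (rule mrac_trajectory.intro[OF mrac_axioms mrac_trajectory_axioms.intro[OF assms]])

lemma uniformly_stable:
  assumes "0 < \<epsilon>"
  shows "\<exists>\<delta>>0. \<forall>s\<ge>t0. \<forall>x kxh krh thh.
    cl_solution A b kp \<theta> \<phi> Ar br r P xr Ym \<eta> s x kxh krh thh \<and>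
    norm (chi kx kr \<theta> x xr kxh krh thh s) < \<delta> \<longrightarrow>
    (\<forall>t\<ge>s. norm (chi kx kr \<theta> x xr kxh krh thh t) < \<epsilon>)"
proof (intro exI[of _ "\<epsilon> / \<alpha>"] conjI allI impI)
  show "0 < \<epsilon> / \<alpha>" using assms \<alpha>_pos by simp
  fix s x kxh krh thh t
  assume "t0 \<le> s" "s \<le> t" and sol: "cl_solution A b kp \<theta> \<phi> Ar br r P xr Ym \<eta> s x kxh krh thh
    \<and> norm (chi kx kr \<theta> x xr kxh krh thh s) < \<epsilon> / \<alpha>"
  then have "norm (chi kx kr \<theta> x xr kxh krh thh t) \<le> \<alpha> * norm (chi kx kr \<theta> x xr kxh krh thh s)"
    by (intro mrac_trajectory.norm_err_bound[OF mrac_trajectoryI]) auto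
  also have "\<dots> < \<epsilon>" using sol \<alpha>_pos by (simp add: pos_less_divide_eq mult.commute)
  finally show "norm (chi kx kr \<theta> x xr kxh krh thh t) < \<epsilon>" .
qed

lemma exponentially_stable:
  assumes "t0 \<le> tq"
  shows "\<exists>c>0. \<exists>a>0. \<exists>k>0. \<forall>s\<ge>tq. \<forall>x kxh krh thh.
    cl_solution A b kp \<theta> \<phi> Ar br r P xr Ym \<eta> s x kxh krh thh \<and>
    norm (chi kx kr \<theta> x xr kxh krh thh s) < c \<longrightarrow>
    (\<forall>t\<ge>s. norm (chi kx kr \<theta> x xr kxh krh thh t)
      \<le> a * exp (- k * (t - s)) * norm (chi kx kr \<theta> x xr kxh krh thh s))"
proof -
  have "norm (chi kx kr \<theta> x xr kxh krh thh t)
      \<le> \<alpha> * exp (- \<kappa> * (t - s)) * norm (chi kx kr \<theta> x xr kxh krh thh s)"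
    if "tq \<le> s" "s \<le> t" "cl_solution A b kp \<theta> \<phi> Ar br r P xr Ym \<eta> s x kxh krh thh"
    for s x kxh krh thh t
    using that assms by (intro mrac_trajectory.norm_err_exp_decay[OF mrac_trajectoryI]) auto
  then show ?thesis using zero_less_one \<alpha>_pos \<kappa>_pos by meson
qed

lemma exp_decay_after_tq:
  assumes "t0 \<le> tq" "cl_solution A b kp \<theta> \<phi> Ar br r P xr Ym \<eta> t0 x kxh krh thh" "tq < t"
  shows "norm (chi kx kr \<theta> x xr kxh krh thh t)
    \<le> \<alpha> * exp (- \<kappa> * (t - tq)) * norm (chi kx kr \<theta> x xr kxh krh thh t0)"
  using assms by (intro mrac_trajectory.norm_err_exp_decay[OF mrac_trajectoryI]) auto

end

theorem theorem1:
  fixes A :: "real^'n^'n" and b :: "real^'n" and kp :: real and \<theta> :: "real^'p"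
    and \<phi> :: "real^'n \<Rightarrow> real^'p"
    and Ar :: "real^'n^'n" and br :: "real^'n" and r :: "real \<Rightarrow> real"
    and xr :: "real \<Rightarrow> real^'n"
    and P Q :: "real^'n^'n" and kx :: "real^'n" and kr :: real
    and t0 tq :: real
    and Ym :: "real \<Rightarrow> real^('n + unit + 'p)^'n" and \<eta> :: "real \<Rightarrow> real"
  assumes bb: "b \<bullet> b > 0"
    and kp: "kp \<noteq> 0"
    and phi_lip: "loc_lipschitz \<phi>"
    and hurw: "hurwitz Ar"
    and r_bdd: "bounded (r ` {t0..})"
    and r_pw: "pw_continuous_from t0 r"
    and xr_cont: "continuous_on {t0..} xr"
    and xr_ode: "\<exists>S. countable S \<and>
        (\<forall>t\<in>{t0<..} - S. (xr has_vector_derivative (Ar *v xr t + r t *s br)) (at t))"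
    and P_pd: "sym_pos_def P" and Q_pd: "sym_pos_def Q"
    and lyap: "transpose Ar ** P + P ** Ar + Q = 0"
    and match_x: "A + kp *\<^sub>R outer b kx = Ar"
    and match_r: "(kp * kr) *s b = br"
    and tq: "tq > t0"
    and Ym: "\<forall>t\<ge>tq. Ym t = WT A b kp \<theta>"
    and eta: "\<forall>t. \<eta> t = (if t < tq then 0 else 1)"
  shows
    "(\<forall>\<epsilon>>0. \<exists>\<delta>>0. \<forall>s\<ge>t0. \<forall>x kxh krh thh.
        cl_solution A b kp \<theta> \<phi> Ar br r P xr Ym \<eta> s x kxh krh thh \<and>
        norm (chi kx kr \<theta> x xr kxh krh thh s) < \<delta> \<longrightarrow>
        (\<forall>t\<ge>s. norm (chi kx kr \<theta> x xr kxh krh thh t) < \<epsilon>))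
   \<and> (\<exists>c>0. \<exists>a>0. \<exists>k>0. \<forall>s\<ge>tq. \<forall>x kxh krh thh.
        cl_solution A b kp \<theta> \<phi> Ar br r P xr Ym \<eta> s x kxh krh thh \<and>
        norm (chi kx kr \<theta> x xr kxh krh thh s) < c \<longrightarrow>
        (\<forall>t\<ge>s. norm (chi kx kr \<theta> x xr kxh krh thh t)
                 \<le> a * exp (- k * (t - s)) * norm (chi kx kr \<theta> x xr kxh krh thh s)))
   \<and> (let \<kappa> = (1/2) * min (lambda_min Q) (2 * \<bar>kp\<bar>^2 * (b \<bullet> b))
                / max (lambda_max P) \<bar>kp\<bar>;
          \<alpha> = sqrt (max (lambda_max P) \<bar>kp\<bar> / min (lambda_min P) \<bar>kp\<bar>)
      in \<forall>x kxh krh thh. cl_solution A b kp \<theta> \<phi> Ar br r P xr Ym \<eta> t0 x kxh krh thh \<longrightarrow>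
           (\<forall>t>tq. norm (chi kx kr \<theta> x xr kxh krh thh t)
                    \<le> \<alpha> * exp (- \<kappa> * (t - tq)) * norm (chi kx kr \<theta> x xr kxh krh thh t0)))"
proof -
  interpret mrac A b kp \<theta> \<phi> Ar br r xr P Q kx kr t0 tq Ym \<eta>
    using assms by unfold_locales auto
  \<comment> \<open>phi_lip, hurw, r_bdd and r_pw only guarantee that closed-loop solutions exist; the
    Lyapunov argument does not need them.\<close>
  have "t0 \<le> tq" using tq by simp
  then show ?thesis
    unfolding Let_def V_lo_def[symmetric] V_hi_def[symmetric] V_rate_def[symmetric]
      \<kappa>_def[symmetric] \<alpha>_def[symmetric]
    by (intro conjI allI impI uniformly_stable exponentially_stable exp_decay_after_tq)
qed

end
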